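(* Let $G$ be a finite group and $N\unlhd G$ a normal subgroup. If $G$ is almost monomial, then the quotient group $G/N$ is almost monomial.
   Context: A finite group $G$ is called almost monomial if for every two distinct complex irreducible characters $\chi$ and $\psi$ of $G$ there exist a subgroup $H\le G$ and a linear (degree one) character $\varphi$ of $H$ such that the induced character $\operatorname{Ind}_H^G\varphi$ contains $\chi$ (i.e. $\langle \operatorname{Ind}_H^G\varphi,\chi\rangle\neq 0$) and does not contain $\psi$ (i.e. $\langle \operatorname{Ind}_H^G\varphi,\psi\rangle=0$), where $\langle\,,\rangle$ is the usual inner product of class functions. *)

theory Defs
  imports "HOL-Algebra.Coset" "Jordan_Normal_Form.Matrix"
begin

definition is_rep :: "('a, 'b) monoid_scheme \<Rightarrow> nat \<Rightarrow> ('a \<Rightarrow> complex mat) \<Rightarrow> bool" where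
  "is_rep G n \<rho> \<longleftrightarrow>
     (\<forall>g \<in> carrier G. \<rho> g \<in> carrier_mat n n) \<and>
     \<rho> \<one>\<^bsub>G\<^esub> = 1\<^sub>m n \<and>
     (\<forall>g \<in> carrier G. \<forall>h \<in> carrier G. \<rho> (g \<otimes>\<^bsub>G\<^esub> h) = \<rho> g * \<rho> h)"

definition is_subspace :: "nat \<Rightarrow> complex vec set \<Rightarrow> bool" where
  "is_subspace n W \<longleftrightarrow> W \<subseteq> carrier_vec n \<and> 0\<^sub>v n \<in> W \<and>
     (\<forall>v \<in> W. \<forall>w \<in> W. v + w \<in> W) \<and> (\<forall>c. \<forall>v \<in> W. c \<cdot>\<^sub>v v \<in> W)"

definition is_irr_rep :: "('a, 'b) monoid_scheme \<Rightarrow> nat \<Rightarrow> ('a \<Rightarrow> complex mat) \<Rightarrow> bool" where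
  "is_irr_rep G n \<rho> \<longleftrightarrow> is_rep G n \<rho> \<and> n > 0 \<and>
     (\<forall>W. is_subspace n W \<and> (\<forall>g \<in> carrier G. \<forall>w \<in> W. \<rho> g *\<^sub>v w \<in> W)
          \<longrightarrow> W = {0\<^sub>v n} \<or> W = carrier_vec n)"

definition character_of :: "('a, 'b) monoid_scheme \<Rightarrow> nat \<Rightarrow> ('a \<Rightarrow> complex mat) \<Rightarrow> 'a \<Rightarrow> complex" where
  "character_of G n \<rho> g = (if g \<in> carrier G then (\<Sum>i<n. \<rho> g $$ (i, i)) else 0)"

definition irr_chars :: "('a, 'b) monoid_scheme \<Rightarrow> ('a \<Rightarrow> complex) set" where
  "irr_chars G = {character_of G n \<rho> | n \<rho>. is_irr_rep G n \<rho>}"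

definition linear_char :: "('a, 'b) monoid_scheme \<Rightarrow> 'a set \<Rightarrow> ('a \<Rightarrow> complex) \<Rightarrow> bool" where
  "linear_char G H \<phi> \<longleftrightarrow> (\<forall>x \<in> H. \<phi> x \<noteq> 0) \<and>
     (\<forall>x \<in> H. \<forall>y \<in> H. \<phi> (x \<otimes>\<^bsub>G\<^esub> y) = \<phi> x * \<phi> y)"

definition induced :: "('a, 'b) monoid_scheme \<Rightarrow> 'a set \<Rightarrow> ('a \<Rightarrow> complex) \<Rightarrow> 'a \<Rightarrow> complex" where
  "induced G H \<phi> g =
     (if g \<in> carrier G then
        (\<Sum>x \<in> carrier G. (if x \<otimes>\<^bsub>G\<^esub> g \<otimes>\<^bsub>G\<^esub> inv\<^bsub>G\<^esub> x \<in> H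
                            then \<phi> (x \<otimes>\<^bsub>G\<^esub> g \<otimes>\<^bsub>G\<^esub> inv\<^bsub>G\<^esub> x) else 0)) / of_nat (card H)
      else 0)"

definition cf_inner :: "('a, 'b) monoid_scheme \<Rightarrow> ('a \<Rightarrow> complex) \<Rightarrow> ('a \<Rightarrow> complex) \<Rightarrow> complex" where
  "cf_inner G f g = (\<Sum>x \<in> carrier G. f x * cnj (g x)) / of_nat (card (carrier G))"

definition almost_monomial :: "('a, 'b) monoid_scheme \<Rightarrow> bool" where
  "almost_monomial G \<longleftrightarrow>
     (\<forall>\<chi> \<in> irr_chars G. \<forall>\<psi> \<in> irr_chars G. \<chi> \<noteq> \<psi> \<longrightarrow>
        (\<exists>H \<phi>. subgroup H G \<and> linear_char G H \<phi> \<and>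
               cf_inner G (induced G H \<phi>) \<chi> \<noteq> 0 \<and> cf_inner G (induced G H \<phi>) \<psi> = 0))"

end

theory Submission
  imports Defs "HOL-Algebra.Group_Action"
begin

text \<open>Irreducible characters of \<open>G/N\<close> inflate to distinct irreducible characters of \<open>G\<close>, so
  almost monomiality of \<open>G\<close> provides a subgroup \<open>K\<close> and a linear character \<open>\<phi>\<close> of \<open>K\<close>
  separating the inflations. By Frobenius reciprocity the inner product of \<open>Ind\<^sub>K\<^sup>G \<phi>\<close> with an
  inflated character \<open>\<chi>\<close> is an average of \<open>\<phi>\<cdot>\<chi>\<close> over \<open>K\<close>; as \<open>\<chi>\<close> is constant on
  \<open>K \<inter> N\<close>-cosets, this average vanishes unless \<open>\<phi>\<close> is trivial on \<open>K \<inter> N\<close>. Then \<open>\<phi>\<close>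
  factors through a linear character \<open>\<phi>'\<close> of \<open>KN/N\<close>, and the same averaging shows that inducing
  \<open>\<phi>'\<close> to \<open>G/N\<close> gives the same inner products with characters of \<open>G/N\<close> as inducing \<open>\<phi>\<close> to \<open>G\<close>
  gives with their inflations.\<close>

lemma trace_mult_comm:
  fixes A B :: "complex mat"
  assumes "A \<in> carrier_mat n n" "B \<in> carrier_mat n n"
  shows "(\<Sum>i<n. (A * B) $$ (i, i)) = (\<Sum>i<n. (B * A) $$ (i, i))"
proof -
  have "(\<Sum>i<n. (A * B) $$ (i, i)) = (\<Sum>i<n. \<Sum>k<n. A $$ (i, k) * B $$ (k, i))"
    using assms by (intro sum.cong refl) (auto simp: scalar_prod_def lessThan_atLeast0 intro!: sum.cong)
  also have "\<dots> = (\<Sum>k<n. \<Sum>i<n. B $$ (k, i) * A $$ (i, k))"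
    by (subst sum.swap) (simp add: mult.commute)
  also have "\<dots> = (\<Sum>i<n. (B * A) $$ (i, i))"
    using assms by (intro sum.cong refl) (auto simp: scalar_prod_def lessThan_atLeast0 intro!: sum.cong)
  finally show ?thesis .
qed

definition class_fun :: "('a, 'b) monoid_scheme \<Rightarrow> ('a \<Rightarrow> complex) \<Rightarrow> bool" where
  "class_fun G \<chi> \<longleftrightarrow> (\<forall>x \<in> carrier G. \<forall>g \<in> carrier G. \<chi> (x \<otimes>\<^bsub>G\<^esub> g \<otimes>\<^bsub>G\<^esub> inv\<^bsub>G\<^esub> x) = \<chi> g)"

lemma class_fun_character_of:
  fixes G (structure)
  assumes "group G" and rep: "is_rep G n \<rho>"
  shows "class_fun G (character_of G n \<rho>)"
  unfolding class_fun_def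
proof (intro ballI)
  interpret group G by fact
  fix x y assume x: "x \<in> carrier G" and y: "y \<in> carrier G"
  have carr: "\<And>g. g \<in> carrier G \<Longrightarrow> \<rho> g \<in> carrier_mat n n"
    and mult: "\<And>g h. g \<in> carrier G \<Longrightarrow> h \<in> carrier G \<Longrightarrow> \<rho> (g \<otimes> h) = \<rho> g * \<rho> h"
    and one: "\<rho> \<one> = 1\<^sub>m n"
    using rep by (auto simp: is_rep_def)
  have inv_x: "\<rho> (inv x) * \<rho> x = 1\<^sub>m n"
    using x by (simp flip: mult add: one)
  have "(\<Sum>i<n. (\<rho> x * \<rho> y * \<rho> (inv x)) $$ (i, i)) = (\<Sum>i<n. (\<rho> (inv x) * (\<rho> x * \<rho> y)) $$ (i, i))"
    using x y carr by (intro trace_mult_comm) (auto intro!: mult_carrier_mat)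
  also have "\<rho> (inv x) * (\<rho> x * \<rho> y) = \<rho> (inv x) * \<rho> x * \<rho> y"
    using x y carr by (intro assoc_mult_mat[symmetric]) auto
  also have "\<dots> = \<rho> y"
    using carr[OF y] inv_x by simp
  finally show "character_of G n \<rho> (x \<otimes> y \<otimes> inv x) = character_of G n \<rho> y"
    using x y by (simp add: character_of_def mult)
qed

lemma cf_inner_induced_class_fun:
  fixes G (structure)
  assumes "group G" and fin: "finite (carrier G)" and K: "subgroup K G" and "class_fun G \<chi>"
  shows "cf_inner G (induced G K \<phi>) \<chi> = (\<Sum>y\<in>K. \<phi> y * cnj (\<chi> y)) / of_nat (card K)"
proof -
  interpret group G by fact
  define S where "S = (\<Sum>y\<in>K. \<phi> y * cnj (\<chi> y))"
  define k where "k y = (if y \<in> K then \<phi> y * cnj (\<chi> y) else 0)" for y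
  have "(\<Sum>g\<in>carrier G. k g) = S"
    unfolding k_def S_def using fin subgroup.subset[OF K] by (simp add: sum.If_cases Int_absorb1)
  have conj_sum: "(\<Sum>g\<in>carrier G. (if x \<otimes> g \<otimes> inv x \<in> K then \<phi> (x \<otimes> g \<otimes> inv x) else 0) * cnj (\<chi> g)) = S"
    if x: "x \<in> carrier G" for x
  proof -
    have "(\<Sum>g\<in>carrier G. (if x \<otimes> g \<otimes> inv x \<in> K then \<phi> (x \<otimes> g \<otimes> inv x) else 0) * cnj (\<chi> g))
        = (\<Sum>g\<in>carrier G. k (x \<otimes> g \<otimes> inv x))"
      using x \<open>class_fun G \<chi>\<close> by (intro sum.cong) (auto simp: k_def class_fun_def)
    also have "\<dots> = (\<Sum>g\<in>carrier G. k g)"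
      using sum.reindex_bij_betw[OF conjugation_is_bij[OF x, simplified], of k] by simp
    finally show ?thesis using \<open>(\<Sum>g\<in>carrier G. k g) = S\<close> by simp
  qed
  have "(\<Sum>g\<in>carrier G. induced G K \<phi> g * cnj (\<chi> g))
      = (\<Sum>x\<in>carrier G. (\<Sum>g\<in>carrier G. (if x \<otimes> g \<otimes> inv x \<in> K then \<phi> (x \<otimes> g \<otimes> inv x) else 0)
                                           * cnj (\<chi> g)) / of_nat (card K))"
    by (simp add: induced_def sum_divide_distrib sum_distrib_right) (rule sum.swap)
  also have "\<dots> = of_nat (card (carrier G)) * S / of_nat (card K)"
    by (simp add: conj_sum)
  finally show ?thesis
    using fin one_closed by (auto simp: cf_inner_def S_def card_eq_0_iff)
qed

lemma class_fun_irr_chars: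
  assumes "group G" "\<chi> \<in> irr_chars G"
  shows "class_fun G \<chi>"
proof -
  obtain n \<rho> where "\<chi> = character_of G n \<rho>" "is_rep G n \<rho>"
    using assms(2) by (auto simp: irr_chars_def is_irr_rep_def)
  then show ?thesis using class_fun_character_of[OF assms(1)] by simp
qed

lemma irr_chars_outside_carrier:
  assumes "\<chi> \<in> irr_chars G" "x \<notin> carrier G"
  shows "\<chi> x = 0"
  using assms by (auto simp: irr_chars_def character_of_def)

definition inflate :: "('a, 'b) monoid_scheme \<Rightarrow> 'a set \<Rightarrow> ('a set \<Rightarrow> complex) \<Rightarrow> 'a \<Rightarrow> complex" where
  "inflate G N \<chi> g = (if g \<in> carrier G then \<chi> (N #>\<^bsub>G\<^esub> g) else 0)"

lemma (in normal) character_of_inflate: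
  "character_of G n (\<lambda>g. \<rho> (H #> g)) = inflate G H (character_of (G Mod H) n \<rho>)"
  by (auto simp: fun_eq_iff inflate_def character_of_def carrier_FactGroup)

lemma (in normal) is_rep_inflate:
  assumes "is_rep (G Mod H) n \<rho>"
  shows "is_rep G n (\<lambda>g. \<rho> (H #> g))"
  using assms by (auto simp: is_rep_def carrier_FactGroup rcos_sum coset_mult_one subset)

lemma (in normal) is_irr_rep_inflate:
  assumes "is_irr_rep (G Mod H) n \<rho>"
  shows "is_irr_rep G n (\<lambda>g. \<rho> (H #> g))"
proof -
  have "is_subspace n W \<and> (\<forall>g \<in> carrier G. \<forall>w \<in> W. \<rho> (H #> g) *\<^sub>v w \<in> W)
    \<Longrightarrow> W = {0\<^sub>v n} \<or> W = carrier_vec n" for W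
    using assms by (auto simp: is_irr_rep_def carrier_FactGroup)
  then show ?thesis
    using assms is_rep_inflate by (auto simp: is_irr_rep_def)
qed

lemma (in normal) inflate_irr_chars:
  assumes "\<chi> \<in> irr_chars (G Mod H)"
  shows "inflate G H \<chi> \<in> irr_chars G"
proof -
  obtain n \<rho> where \<chi>: "\<chi> = character_of (G Mod H) n \<rho>" and irr: "is_irr_rep (G Mod H) n \<rho>"
    using assms by (auto simp: irr_chars_def)
  have "inflate G H \<chi> = character_of G n (\<lambda>g. \<rho> (H #> g))"
    by (simp add: \<chi> character_of_inflate)
  with is_irr_rep_inflate[OF irr] show ?thesis
    unfolding irr_chars_def by blast
qed

lemma (in normal) inj_on_inflate_irr_chars: "inj_on (inflate G H) (irr_chars (G Mod H))"
proof (rule inj_onI, rule ext)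
  fix \<chi> \<psi> C
  assume \<chi>: "\<chi> \<in> irr_chars (G Mod H)" and \<psi>: "\<psi> \<in> irr_chars (G Mod H)"
    and eq: "inflate G H \<chi> = inflate G H \<psi>"
  show "\<chi> C = \<psi> C"
  proof (cases "C \<in> carrier (G Mod H)")
    case True
    then obtain g where "g \<in> carrier G" "C = H #> g" by (auto simp: carrier_FactGroup)
    then show ?thesis using fun_cong[OF eq, of g] by (simp add: inflate_def)
  next
    case False
    then show ?thesis using \<chi> \<psi> irr_chars_outside_carrier by metis
  qed
qed

lemma (in normal) class_fun_inflate:
  assumes "class_fun (G Mod H) \<chi>"
  shows "class_fun G (inflate G H \<chi>)"
  unfolding class_fun_def
proof (intro ballI)
  fix x g assume x: "x \<in> carrier G" and g: "g \<in> carrier G"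
  have "inv\<^bsub>G Mod H\<^esub> (H #> x) = H #> inv x"
    using x by (simp add: inv_FactGroup carrier_FactGroup rcos_inv)
  then have "H #> (x \<otimes> g \<otimes> inv x)
      = (H #> x) \<otimes>\<^bsub>G Mod H\<^esub> (H #> g) \<otimes>\<^bsub>G Mod H\<^esub> inv\<^bsub>G Mod H\<^esub> (H #> x)"
    using x g by (simp add: rcos_sum)
  then show "inflate G H \<chi> (x \<otimes> g \<otimes> inv x) = inflate G H \<chi> g"
    using assms x g by (simp add: inflate_def class_fun_def carrier_FactGroup)
qed

lemma (in normal) inflate_mult_right:
  assumes "y \<in> carrier G" "k \<in> H"
  shows "inflate G H \<chi> (y \<otimes> k) = inflate G H \<chi> y"
proof -
  interpret Q: group "G Mod H" by (rule factorgroup_is_group)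
  have "H #> (y \<otimes> k) = (H #> y) \<otimes>\<^bsub>G Mod H\<^esub> (H #> k)"
    using assms by (simp add: rcos_sum)
  also have "H #> k = \<one>\<^bsub>G Mod H\<^esub>"
    using assms by (simp add: coset_join2 subgroup_axioms)
  finally show ?thesis
    using assms Q.r_one by (simp add: inflate_def carrier_FactGroup)
qed

lemma (in group) rcos_eq_iff:
  assumes "subgroup H G" "x \<in> carrier G" "y \<in> carrier G"
  shows "H #> x = H #> y \<longleftrightarrow> y \<otimes> inv x \<in> H"
proof
  assume "H #> x = H #> y"
  then have "y \<in> H #> x"
    using assms by (simp add: repr_independenceD)
  then show "y \<otimes> inv x \<in> H"
    using assms by (simp add: subgroup.rcos_module_imp[OF _ is_group])
next
  assume "y \<otimes> inv x \<in> H"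
  then have "y \<in> H #> x"
    using assms by (simp add: subgroup.rcos_module_rev[OF _ is_group])
  then show "H #> x = H #> y"
    using assms repr_independence by blast
qed

lemma (in group) bij_betw_mult_right_subgroup:
  assumes K: "subgroup K G" and k: "k \<in> K"
  shows "bij_betw (\<lambda>y. y \<otimes> k) K K"
proof (rule bij_betwI[where g = "\<lambda>y. y \<otimes> inv k"])
  have k_inv: "inv k \<in> K"
    using k by (rule subgroup.m_inv_closed[OF K])
  show "(\<lambda>y. y \<otimes> k) \<in> K \<rightarrow> K" "(\<lambda>y. y \<otimes> inv k) \<in> K \<rightarrow> K"
    using k k_inv by (auto intro: subgroup.m_closed[OF K])
  have "k \<in> carrier G"
    using k by (rule subgroup.mem_carrier[OF K])
  then show "y \<otimes> k \<otimes> inv k = y" "y \<otimes> inv k \<otimes> k = y" if "y \<in> K" for y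
    using subgroup.mem_carrier[OF K that] by (simp_all add: m_assoc)
qed

text \<open>Shifting the summation over \<open>K\<close> by \<open>k\<close> multiplies the sum by \<open>\<phi> k\<close>.\<close>
lemma (in group) linear_char_eq_1_if_sum_nonzero:
  assumes K: "subgroup K G" and lin: "linear_char G K \<phi>" and k: "k \<in> K"
    and f: "\<And>y. y \<in> K \<Longrightarrow> f (y \<otimes> k) = f y" and sum: "(\<Sum>y\<in>K. \<phi> y * f y) \<noteq> 0"
  shows "\<phi> k = 1"
proof -
  have "(\<Sum>y\<in>K. \<phi> y * f y) = (\<Sum>y\<in>K. \<phi> (y \<otimes> k) * f (y \<otimes> k))"
    using sum.reindex_bij_betw[OF bij_betw_mult_right_subgroup[OF K k], of "\<lambda>y. \<phi> y * f y"]
    by simp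
  also have "\<dots> = \<phi> k * (\<Sum>y\<in>K. \<phi> y * f y)"
    using lin k f by (simp add: linear_char_def sum_distrib_left mult_ac)
  finally have "(1 - \<phi> k) * (\<Sum>y\<in>K. \<phi> y * f y) = 0"
    by (simp add: algebra_simps)
  with sum show ?thesis by simp
qed

lemma (in normal) linear_char_trivial_if_cf_inner_induced_inflate:
  assumes fin: "finite (carrier G)" and K: "subgroup K G" and lin: "linear_char G K \<phi>"
    and "class_fun (G Mod H) \<chi>" and "cf_inner G (induced G K \<phi>) (inflate G H \<chi>) \<noteq> 0"
  shows "\<forall>k \<in> K \<inter> H. \<phi> k = 1"
proof
  fix k assume k: "k \<in> K \<inter> H"
  have "(\<Sum>y\<in>K. \<phi> y * cnj (inflate G H \<chi> y)) \<noteq> 0"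
    using assms cf_inner_induced_class_fun[OF is_group fin K class_fun_inflate] by auto
  moreover have "cnj (inflate G H \<chi> (y \<otimes> k)) = cnj (inflate G H \<chi> y)" if "y \<in> K" for y
    using that k subgroup.mem_carrier[OF K] by (simp add: inflate_mult_right)
  ultimately show "\<phi> k = 1"
    using k by (intro linear_char_eq_1_if_sum_nonzero[OF K lin]) auto
qed

text \<open>The character of \<open>KN/N\<close> through which a linear character \<open>\<phi>\<close> of \<open>K\<close> factors when it is
  trivial on \<open>K \<inter> N\<close>.\<close>
definition factor_char :: "('a, 'b) monoid_scheme \<Rightarrow> 'a set \<Rightarrow> 'a set \<Rightarrow> ('a \<Rightarrow> complex) \<Rightarrow> 'a set \<Rightarrow> complex" where
  "factor_char G N K \<phi> C = \<phi> (SOME h. h \<in> K \<and> C = N #>\<^bsub>G\<^esub> h)"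

lemma (in normal) factor_char_rcos:
  assumes K: "subgroup K G" and lin: "linear_char G K \<phi>"
    and triv: "\<forall>k \<in> K \<inter> H. \<phi> k = 1" and y: "y \<in> K"
  shows "factor_char G H K \<phi> (H #> y) = \<phi> y"
proof -
  define h where "h = (SOME h. h \<in> K \<and> H #> y = H #> h)"
  have "\<exists>h. h \<in> K \<and> H #> y = H #> h"
    using y by blast
  then have h: "h \<in> K \<and> H #> y = H #> h"
    unfolding h_def by (rule someI_ex)
  have G: "y \<in> carrier G" "h \<in> carrier G"
    using y h subgroup.mem_carrier[OF K] by blast+
  have "h \<otimes> inv y \<in> K"
    using h subgroup.m_inv_closed[OF K y] by (blast intro: subgroup.m_closed[OF K])
  moreover have "h \<otimes> inv y \<in> H"
    using h rcos_eq_iff[OF subgroup_axioms G] by simp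
  ultimately have hy: "h \<otimes> inv y \<in> K \<inter> H" by blast
  have "\<phi> h = \<phi> (h \<otimes> inv y \<otimes> y)"
    using G by (simp add: m_assoc)
  also have "\<dots> = \<phi> (h \<otimes> inv y) * \<phi> y"
    using lin hy y by (simp add: linear_char_def)
  finally show ?thesis
    using triv hy by (simp add: factor_char_def flip: h_def)
qed

lemma (in normal) linear_char_factor_char:
  assumes K: "subgroup K G" and lin: "linear_char G K \<phi>" and triv: "\<forall>k \<in> K \<inter> H. \<phi> k = 1"
  shows "linear_char (G Mod H) ((\<lambda>g. H #> g) ` K) (factor_char G H K \<phi>)"
  unfolding linear_char_def
proof (intro conjI ballI)
  fix C assume "C \<in> (\<lambda>g. H #> g) ` K"
  then show "factor_char G H K \<phi> C \<noteq> 0"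
    using lin by (auto simp: factor_char_rcos[OF K lin triv] linear_char_def)
next
  fix C D assume "C \<in> (\<lambda>g. H #> g) ` K" "D \<in> (\<lambda>g. H #> g) ` K"
  then obtain y z where y: "y \<in> K" "C = H #> y" and z: "z \<in> K" "D = H #> z" by blast
  have "C \<otimes>\<^bsub>G Mod H\<^esub> D = H #> (y \<otimes> z)"
    using y z subgroup.mem_carrier[OF K] by (simp add: rcos_sum)
  moreover have "y \<otimes> z \<in> K"
    using y(1) z(1) by (rule subgroup.m_closed[OF K])
  ultimately show "factor_char G H K \<phi> (C \<otimes>\<^bsub>G Mod H\<^esub> D) = factor_char G H K \<phi> C * factor_char G H K \<phi> D"
    using y z lin by (simp add: factor_char_rcos[OF K lin triv] linear_char_def)
qed

lemma (in normal) subgroup_rcos_image: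
  assumes "subgroup K G"
  shows "subgroup ((\<lambda>g. H #> g) ` K) (G Mod H)"
proof -
  interpret group_hom G "G Mod H" "\<lambda>g. H #> g"
    by (intro group_hom.intro group_hom_axioms.intro is_group factorgroup_is_group r_coset_hom_Mod)
  show ?thesis by (rule subgroup_img_is_subgroup[OF assms])
qed

lemma (in normal) rcos_fiber_subgroup:
  assumes K: "subgroup K G" and h: "h \<in> K"
  shows "{y \<in> K. H #> y = H #> h} = (K \<inter> H) #> h"
proof -
  have hG: "h \<in> carrier G"
    using h by (rule subgroup.mem_carrier[OF K])
  show ?thesis
  proof (intro equalityI subsetI)
    fix y assume "y \<in> {y \<in> K. H #> y = H #> h}"
    then have y: "y \<in> K" "H #> y = H #> h" by auto
    have yG: "y \<in> carrier G"
      using y(1) by (rule subgroup.mem_carrier[OF K])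
    have "y \<otimes> inv h \<in> K"
      using y(1) subgroup.m_inv_closed[OF K h] by (rule subgroup.m_closed[OF K])
    moreover have "y \<otimes> inv h \<in> H"
      using y(2) rcos_eq_iff[OF subgroup_axioms hG yG] by simp
    moreover have "y = y \<otimes> inv h \<otimes> h"
      using yG hG by (simp add: m_assoc)
    ultimately show "y \<in> (K \<inter> H) #> h"
      unfolding r_coset_def by blast
  next
    fix y assume "y \<in> (K \<inter> H) #> h"
    then obtain k where k: "k \<in> K" "k \<in> H" "y = k \<otimes> h"
      unfolding r_coset_def by blast
    have kG: "k \<in> carrier G"
      using k(2) subset by blast
    have "H #> h = H #> y"
      using k kG hG rcos_eq_iff[OF subgroup_axioms hG, of y] by (simp add: m_assoc)
    moreover have "y \<in> K"
      using k h by (simp add: subgroup.m_closed[OF K])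
    ultimately show "y \<in> {y \<in> K. H #> y = H #> h}" by simp
  qed
qed

lemma (in normal) sum_rcos_image:
  assumes fin: "finite (carrier G)" and K: "subgroup K G"
  shows "(\<Sum>y\<in>K. F (H #> y)) = of_nat (card (K \<inter> H)) * (\<Sum>C \<in> (\<lambda>g. H #> g) ` K. F C)"
proof -
  have KG: "K \<subseteq> carrier G" using K subgroup.subset by blast
  have "(\<Sum>y\<in>K. F (H #> y)) = (\<Sum>C \<in> (\<lambda>g. H #> g) ` K. \<Sum>y \<in> {y \<in> K. H #> y = C}. F (H #> y))"
    using fin KG finite_subset by (intro sum.image_gen)
  also have "\<dots> = (\<Sum>C \<in> (\<lambda>g. H #> g) ` K. \<Sum>y \<in> {y \<in> K. H #> y = C}. F C)"
    by (intro sum.cong) auto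
  also have "\<dots> = (\<Sum>C \<in> (\<lambda>g. H #> g) ` K. of_nat (card (K \<inter> H)) * F C)"
  proof (intro sum.cong refl)
    fix C assume "C \<in> (\<lambda>g. H #> g) ` K"
    then obtain h where h: "h \<in> K" "C = H #> h" by blast
    have "K \<inter> H \<subseteq> carrier G" "h \<in> carrier G"
      using KG h by auto
    then have "card (K \<inter> H) = card ((K \<inter> H) #> h)"
      by (intro card_rcosets_equal rcosetsI)
    then have "card {y \<in> K. H #> y = C} = card (K \<inter> H)"
      using rcos_fiber_subgroup[OF K h(1)] h(2) by simp
    then show "(\<Sum>y \<in> {y \<in> K. H #> y = C}. F C) = of_nat (card (K \<inter> H)) * F C"
      by simp
  qed
  finally show ?thesis by (simp add: sum_distrib_left)
qed

lemma (in normal) cf_inner_induced_inflate: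
  assumes fin: "finite (carrier G)" and K: "subgroup K G" and lin: "linear_char G K \<phi>"
    and triv: "\<forall>k \<in> K \<inter> H. \<phi> k = 1" and \<chi>: "class_fun (G Mod H) \<chi>"
  shows "cf_inner G (induced G K \<phi>) (inflate G H \<chi>)
       = cf_inner (G Mod H) (induced (G Mod H) ((\<lambda>g. H #> g) ` K) (factor_char G H K \<phi>)) \<chi>"
proof -
  let ?K' = "(\<lambda>g. H #> g) ` K" and ?\<phi>' = "factor_char G H K \<phi>"
  have finQ: "finite (carrier (G Mod H))"
    using fin by (simp add: carrier_FactGroup)
  have KG: "K \<subseteq> carrier G" using K subgroup.subset by blast
  have "card (K \<inter> H) \<noteq> 0"
    using fin KG subgroup.one_closed[OF K] by (auto simp: card_eq_0_iff dest: finite_subset)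
  have card_K: "card K = card (K \<inter> H) * card ?K'"
    using sum_rcos_image[OF fin K, of "\<lambda>_. 1::complex"] by (simp flip: of_nat_mult)
  have "(\<Sum>y\<in>K. \<phi> y * cnj (inflate G H \<chi> y)) = (\<Sum>y\<in>K. ?\<phi>' (H #> y) * cnj (\<chi> (H #> y)))"
    using KG by (intro sum.cong refl) (auto simp: inflate_def factor_char_rcos[OF K lin triv])
  also have "\<dots> = of_nat (card (K \<inter> H)) * (\<Sum>C\<in>?K'. ?\<phi>' C * cnj (\<chi> C))"
    by (rule sum_rcos_image[OF fin K])
  finally show ?thesis
    using cf_inner_induced_class_fun[OF is_group fin K class_fun_inflate[OF \<chi>]]
      cf_inner_induced_class_fun[OF factorgroup_is_group finQ subgroup_rcos_image[OF K] \<chi>]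
    using \<open>card (K \<inter> H) \<noteq> 0\<close> by (simp add: card_K)
qed

theorem theorem2p2:
  fixes G :: "('a, 'b) monoid_scheme" and N :: "'a set"
  assumes "group G" and "finite (carrier G)" and "N \<lhd> G"
    and "almost_monomial G"
  shows "almost_monomial (G Mod N)"
  unfolding almost_monomial_def
proof (intro ballI impI)
  interpret normal N G by fact
  fix \<chi> \<psi> assume \<chi>: "\<chi> \<in> irr_chars (G Mod N)" and \<psi>: "\<psi> \<in> irr_chars (G Mod N)" and "\<chi> \<noteq> \<psi>"
  then have "inflate G N \<chi> \<noteq> inflate G N \<psi>"
    using inj_on_inflate_irr_chars by (auto dest: inj_onD)
  then obtain K \<phi> where K: "subgroup K G" and lin: "linear_char G K \<phi>"
    and sep: "cf_inner G (induced G K \<phi>) (inflate G N \<chi>) \<noteq> 0"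
             "cf_inner G (induced G K \<phi>) (inflate G N \<psi>) = 0"
    using \<open>almost_monomial G\<close> \<chi> \<psi> inflate_irr_chars unfolding almost_monomial_def by blast
  have cf: "class_fun (G Mod N) \<chi>" "class_fun (G Mod N) \<psi>"
    using \<chi> \<psi> class_fun_irr_chars[OF factorgroup_is_group] by auto
  have triv: "\<forall>k \<in> K \<inter> N. \<phi> k = 1"
    using linear_char_trivial_if_cf_inner_induced_inflate[OF \<open>finite (carrier G)\<close> K lin cf(1) sep(1)] .
  show "\<exists>H \<phi>. subgroup H (G Mod N) \<and> linear_char (G Mod N) H \<phi> \<and>
          cf_inner (G Mod N) (induced (G Mod N) H \<phi>) \<chi> \<noteq> 0 \<and>
          cf_inner (G Mod N) (induced (G Mod N) H \<phi>) \<psi> = 0"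
    using subgroup_rcos_image[OF K] linear_char_factor_char[OF K lin triv] sep
      cf_inner_induced_inflate[OF \<open>finite (carrier G)\<close> K lin triv] cf by metis
qed

end
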